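(* Let the polynomials $q_{p,\nu}$ be defined by the recursive construction described in the context. There exists a constant $C$, independent of $p$ and $\nu$, such that \[ \|q_{p,\nu}\|_0^2\le C\,p^{2\nu-1}\qquad\text{for all } p,\nu\in\mathbb{N}. \]
   Context: $\|\cdot\|_0$ is the $L^2(-1,1)$ norm. $L_j$ denotes the Legendre polynomial of degree $j$ on $(-1,1)$, normalized so that $L_j(1)=1$. The $n$-th primitive of $L_i$ is defined by $\psi_{i,0}:=L_i$ and $\psi_{i,n}(x):=\int_{-1}^x\psi_{i,n-1}(\zeta)\,d\zeta$. Recursive construction: - Set $q_{p,0}:=\tfrac12(L_p+L_{p+1})$. - For $\nu\ge0$, set $q_{p,\nu+1}:=q_{p,\nu}+\alpha_{p,\nu+1}\psi_{p,\nu+1}+\beta_{p,\nu+1}\psi_{p+1,\nu+1}$, where \[ \alpha_{p,\nu+1}:=-\frac{q_{p,\nu}^{(\nu+1)}(1)+(-1)^p q_{p,\nu}^{(\nu+1)}(-1)}{2},\qquad \beta_{p,\nu+1}:=-\frac{q_{p,\nu}^{(\nu+1)}(1)-(-1)^p q_{p,\nu}^{(\nu+1)}(-1)}{2}. \] *)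

theory Defs
  imports "HOL-Analysis.Analysis" "HOL-Computational_Algebra.Polynomial"
begin

fun legendre :: "nat \<Rightarrow> real poly" where
  "legendre 0 = 1"
| "legendre (Suc 0) = [:0, 1:]"
| "legendre (Suc (Suc n)) =
     smult (1 / (real n + 2))
       (smult (2 * real n + 3) ([:0, 1:] * legendre (Suc n)) - smult (real n + 1) (legendre n))"

definition prim :: "real poly \<Rightarrow> real poly" where
  "prim P = (THE Q. pderiv Q = P \<and> poly Q (-1) = 0)"

fun psi :: "nat \<Rightarrow> nat \<Rightarrow> real poly" where
  "psi i 0 = legendre i"
| "psi i (Suc n) = prim (psi i n)"

fun qpol :: "nat \<Rightarrow> nat \<Rightarrow> real poly" where
  "qpol p 0 = smult (1/2) (legendre p + legendre (p + 1))"
| "qpol p (Suc \<nu>) =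
     (let d = (pderiv ^^ (Suc \<nu>)) (qpol p \<nu>);
          a = - (poly d 1 + (-1) ^ p * poly d (-1)) / 2;
          b = - (poly d 1 - (-1) ^ p * poly d (-1)) / 2
      in qpol p \<nu> + smult a (psi p (Suc \<nu>)) + smult b (psi (p + 1) (Suc \<nu>)))"

definition L2sq :: "real poly \<Rightarrow> real" where
  "L2sq f = integral {-1..1} (\<lambda>x. (poly f x)\<^sup>2)"

end

theory Submission
  imports Defs
begin

text \<open>Unfolding the recursion, \<open>q\<^sub>p\<^sub>,\<^sub>\<nu> = \<Sum>\<^sub>k\<^sub>\<le>\<^sub>\<nu> \<alpha>\<^sub>k \<psi>\<^sub>p\<^sub>,\<^sub>k + \<beta>\<^sub>k \<psi>\<^sub>p\<^sub>+\<^sub>1\<^sub>,\<^sub>k\<close> with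
  \<open>\<alpha>\<^sub>k = (-1)\<^sup>k L\<^sub>p\<^sub>+\<^sub>1\<^sup>(\<^sup>k\<^sup>)(1) / 2\<close> and \<open>\<beta>\<^sub>k = (-1)\<^sup>k L\<^sub>p\<^sup>(\<^sup>k\<^sup>)(1) / 2\<close>: these are the
  coefficients making \<open>q\<^sub>p\<^sub>,\<^sub>\<nu>\<^sup>(\<^sup>\<nu>\<^sup>)(\<plusminus>1) = 0\<close>, which for the closed form reduces to the
  Bessel polynomial identity \<open>y\<^sub>p\<^sub>+\<^sub>1(x) y\<^sub>p(-x) + y\<^sub>p\<^sub>+\<^sub>1(-x) y\<^sub>p(x) = 2\<close>, the derivatives
  \<open>L\<^sub>n\<^sup>(\<^sup>k\<^sup>)(1)\<close> being the coefficients of \<open>y\<^sub>n\<close>.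

  Since \<open>\<integral> L\<^sub>j = (L\<^sub>j\<^sub>+\<^sub>1 - L\<^sub>j\<^sub>-\<^sub>1) / (2j + 1)\<close>, the primitive \<open>\<psi>\<^sub>i\<^sub>,\<^sub>k\<close> is a combination of
  Legendre polynomials of degree at least \<open>i - k\<close> whose coefficients have absolute sum at most
  \<open>\<Prod>\<^sub>t\<^sub><\<^sub>k 2 / (2(i - t) + 1)\<close>; with \<open>\<parallel>L\<^sub>j\<parallel>\<^sup>2 = 2 / (2j + 1)\<close> and the triangle inequality this
  bounds \<open>\<parallel>\<psi>\<^sub>i\<^sub>,\<^sub>k\<parallel>\<close>. The product against \<open>L\<^sub>p\<^sup>(\<^sup>k\<^sup>)(1)\<close> telescopes to at most
  \<open>(2p + 3)\<^sup>k / k!\<close>, and the remaining factor \<open>(2 / (2(p - k) + 1))\<^sup>1\<^sup>/\<^sup>2\<close> is at most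
  \<open>2\<^sup>k\<^sup>+\<^sup>1 p\<^sup>-\<^sup>1\<^sup>/\<^sup>2\<close>. Hence \<open>\<parallel>q\<^sub>p\<^sub>,\<^sub>\<nu>\<parallel> \<le> 2 p\<^sup>\<nu>\<^sup>-\<^sup>1\<^sup>/\<^sup>2 \<Sum>\<^sub>k 10\<^sup>k / k! \<le> 2 e\<^sup>1\<^sup>0 p\<^sup>\<nu>\<^sup>-\<^sup>1\<^sup>/\<^sup>2\<close>.\<close>

section \<open>Primitives\<close>

lemma pderiv_sum: "pderiv (sum f A) = (\<Sum>x\<in>A. pderiv (f x))"
  by (induction A rule: infinite_finite_induct) (simp_all add: pderiv_add)

lemma prim_unique:
  fixes Q1 Q2 :: "real poly"
  assumes "pderiv Q1 = pderiv Q2" "poly Q1 (-1) = poly Q2 (-1)"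
  shows "Q1 = Q2"
proof -
  obtain h where h: "Q1 - Q2 = [:h:]"
    using pderiv_iszero[of "Q1 - Q2"] assms(1) by (auto simp: pderiv_diff)
  moreover have "poly (Q1 - Q2) (-1) = 0" using assms(2) by simp
  ultimately have "h = 0" by simp
  then show ?thesis using h by simp
qed

lemma prim_exists: "\<exists>Q. pderiv Q = P \<and> poly Q (-1) = (0::real)"
proof -
  define Q where "Q = (\<Sum>i\<le>degree P. monom (coeff P i / real (Suc i)) (Suc i))"
  have "pderiv Q = (\<Sum>i\<le>degree P. monom (coeff P i) i)"
    unfolding Q_def by (simp add: pderiv_sum pderiv_monom)
  also have "\<dots> = P" by (rule poly_as_sum_of_monoms)
  finally show ?thesis
    by (intro exI[of _ "Q - [:poly Q (-1):]"]) (simp add: pderiv_diff)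
qed

lemma prim_eqI: "pderiv Q = P \<Longrightarrow> poly Q (-1) = 0 \<Longrightarrow> prim P = Q"
  unfolding prim_def using prim_exists prim_unique by (intro the_equality) auto

lemma pderiv_prim [simp]: "pderiv (prim P) = P"
  and poly_prim_neg_one [simp]: "poly (prim P) (-1) = 0"
  using prim_eqI prim_exists by metis+

lemma prim_add: "prim (P + Q) = prim P + prim Q"
  by (rule prim_eqI) (auto simp: pderiv_add)

lemma prim_diff: "prim (P - Q) = prim P - prim Q"
  by (rule prim_eqI) (auto simp: pderiv_diff)

lemma prim_smult: "prim (smult c P) = smult c (prim P)"
  by (rule prim_eqI) (auto simp: pderiv_smult)

lemma prim_pderiv: "prim (pderiv Q) = Q - [:poly Q (-1):]"
  by (rule prim_eqI) (auto simp: pderiv_diff)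

section \<open>Legendre polynomials\<close>

declare legendre.simps(3) [simp del]

lemma poly_legendre_SS:
  "(real n + 2) * poly (legendre (Suc (Suc n))) x =
     (2 * real n + 3) * x * poly (legendre (Suc n)) x - (real n + 1) * poly (legendre n) x"
  by (simp add: legendre.simps(3) field_simps)

lemma poly_pderiv_legendre_SS:
  "(real n + 2) * poly (pderiv (legendre (Suc (Suc n)))) x =
     (2 * real n + 3) * (poly (legendre (Suc n)) x + x * poly (pderiv (legendre (Suc n))) x)
     - (real n + 1) * poly (pderiv (legendre n)) x"
  by (simp add: legendre.simps(3) pderiv_smult pderiv_diff pderiv_mult pderiv_pCons field_simps)

lemma poly_legendre_one [simp]: "poly (legendre n) 1 = 1"
proof (induction n rule: legendre.induct)
  case (3 n)
  then have "(real n + 2) * poly (legendre (Suc (Suc n))) 1 = (real n + 2) * 1"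
    using poly_legendre_SS[of n 1] by simp
  then show ?case by (subst (asm) mult_cancel_left) linarith
qed auto

lemma poly_legendre_neg_one [simp]: "poly (legendre n) (-1) = (-1) ^ n"
proof (induction n rule: legendre.induct)
  case (3 n)
  then have "(real n + 2) * poly (legendre (Suc (Suc n))) (-1) = (real n + 2) * (-1) ^ n"
    using poly_legendre_SS[of n "-1"] by (simp add: algebra_simps)
  then show ?case by (subst (asm) mult_cancel_left) simp
qed auto

lemma degree_legendre: "degree (legendre n) \<le> n"
proof (induction n rule: legendre.induct)
  case (3 n)
  have "degree ([:0, 1:] * legendre (Suc n)) \<le> Suc (Suc n)"
    using degree_mult_le[of "[:0, 1::real:]" "legendre (Suc n)"] 3(1) by simp
  then show ?case
    using 3(2) by (auto simp: legendre.simps(3) intro!: degree_diff_le order.trans[OF degree_smult_le])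
qed auto

text \<open>Differentiating the three-term recurrence gives \<open>L'\<^sub>n\<^sub>+\<^sub>2 = L'\<^sub>n + (2n + 3) L\<^sub>n\<^sub>+\<^sub>1\<close>
  as soon as \<open>x L'\<^sub>n\<^sub>+\<^sub>1\<close> is known in terms of \<open>L'\<^sub>n\<close>; that identity in turn follows from
  the derivative formula at the two previous indices, so both are proved by one induction.\<close>

lemma poly_pderiv_legendre_SS_from_x_pderiv:
  assumes "x * poly (pderiv (legendre (Suc n))) x - poly (pderiv (legendre n)) x
             = (real n + 1) * poly (legendre (Suc n)) x"
  shows "poly (pderiv (legendre (Suc (Suc n)))) x
           = poly (pderiv (legendre n)) x + (2 * real n + 3) * poly (legendre (Suc n)) x"
proof -
  have "(real n + 2) * poly (pderiv (legendre (Suc (Suc n)))) x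
      = (real n + 2) * (poly (pderiv (legendre n)) x + (2 * real n + 3) * poly (legendre (Suc n)) x)"
    unfolding poly_pderiv_legendre_SS using assms by (simp add: algebra_simps)
  then show ?thesis by (simp add: add_nonneg_eq_0_iff)
qed

lemma x_pderiv_legendre:
  "x * poly (pderiv (legendre (Suc n))) x - poly (pderiv (legendre n)) x
     = (real n + 1) * poly (legendre (Suc n)) x"
proof (induction n rule: legendre.induct)
  case 2
  then show ?case
    by (simp add: legendre.simps(3) pderiv_pCons pderiv_smult pderiv_diff pderiv_mult field_simps)
next
  case (3 n)
  note D = poly_pderiv_legendre_SS_from_x_pderiv[OF "3.IH"(1)] poly_pderiv_legendre_SS_from_x_pderiv[OF "3.IH"(2)]
  have "(real n + 3) * poly (legendre (Suc (Suc (Suc n)))) x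
      = (2 * real n + 5) * x * poly (legendre (Suc (Suc n))) x - (real n + 2) * poly (legendre (Suc n)) x"
    using poly_legendre_SS[of "Suc n" x] by (simp add: algebra_simps)
  then show ?case using D "3.IH"(2) unfolding of_nat_Suc by algebra
qed (simp add: pderiv_pCons)

lemma pderiv_legendre_SS:
  "pderiv (legendre (Suc (Suc n))) = pderiv (legendre n) + smult (2 * real n + 3) (legendre (Suc n))"
  by (rule poly_ext) (simp add: poly_pderiv_legendre_SS_from_x_pderiv[OF x_pderiv_legendre])

lemma prim_legendre_0: "prim (legendre 0) = legendre 1 + legendre 0"
  by (rule prim_eqI) (simp_all add: pderiv_add pderiv_pCons)

lemma prim_legendre_Suc:
  "prim (legendre (Suc n)) = smult (1 / (2 * real n + 3)) (legendre (Suc (Suc n)) - legendre n)"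
proof (rule prim_eqI)
  have "2 * real n + 3 \<noteq> 0" by simp
  then show "pderiv (smult (1 / (2 * real n + 3)) (legendre (Suc (Suc n)) - legendre n)) = legendre (Suc n)"
    by (simp add: pderiv_smult pderiv_diff pderiv_legendre_SS)
qed simp

lemma poly_prim_legendre_Suc_one [simp]: "poly (prim (legendre (Suc n))) 1 = 0"
  by (simp add: prim_legendre_Suc)

section \<open>Derivatives of Legendre polynomials at the endpoints\<close>

text \<open>\<open>bessel_coeff n k = (n + k)! / ((n - k)! k! 2\<^sup>k)\<close> are the coefficients of the Bessel
  polynomial \<open>y\<^sub>n\<close>; they turn out to be the derivatives \<open>L\<^sub>n\<^sup>(\<^sup>k\<^sup>)(1)\<close>.\<close>

definition bessel_coeff :: "nat \<Rightarrow> nat \<Rightarrow> real" where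
  "bessel_coeff n k = (\<Prod>i<k. (real n - real i) * (real n + real i + 1) / (2 * (real i + 1)))"

fun bessel_poly :: "nat \<Rightarrow> real poly" where
  "bessel_poly 0 = 1"
| "bessel_poly (Suc 0) = [:1, 1:]"
| "bessel_poly (Suc (Suc n)) = smult (2 * real n + 3) ([:0, 1:] * bessel_poly (Suc n)) + bessel_poly n"

lemma bessel_coeff_0 [simp]: "bessel_coeff n 0 = 1"
  by (simp add: bessel_coeff_def)

lemma bessel_coeff_Suc:
  "bessel_coeff n (Suc k) = bessel_coeff n k * ((real n - real k) * (real n + real k + 1) / (2 * (real k + 1)))"
  by (simp add: bessel_coeff_def)

lemma bessel_coeff_eq_0: "n < k \<Longrightarrow> bessel_coeff n k = 0"
  unfolding bessel_coeff_def by (subst prod_zero_iff) (auto intro!: bexI[of _ n])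

lemma bessel_coeff_nonneg: "0 \<le> bessel_coeff n k"
proof (induction k)
  case (Suc k)
  show ?case
  proof (cases "k < n")
    case True
    then show ?thesis using Suc by (simp add: bessel_coeff_Suc)
  qed (simp add: bessel_coeff_eq_0)
qed simp

lemma bessel_coeff_shift:
  "2 * (real k + 1) * bessel_coeff n (Suc k)
     = bessel_coeff (Suc n) k * (real n + 1 - real k) * (real n - real k)"
proof (induction k)
  case (Suc k)
  have "2 * (real (Suc k) + 1) * bessel_coeff n (Suc (Suc k))
      = bessel_coeff n (Suc k) * ((real n - real k - 1) * (real n + real k + 2))"
    unfolding bessel_coeff_Suc[of n "Suc k"] by (simp add: field_simps)
  also have "bessel_coeff n (Suc k)
      = bessel_coeff (Suc n) k * (real n + 1 - real k) * (real n - real k) / (2 * (real k + 1))"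
    using Suc.IH by (simp add: field_simps)
  finally show ?case unfolding bessel_coeff_Suc[of _ k] by (simp add: field_simps)
qed (simp add: bessel_coeff_Suc algebra_simps)

lemma bessel_coeff_diag:
  "2 * (real k + 1) * bessel_coeff (Suc n) (Suc k)
     = bessel_coeff n k * (real n + real k + 1) * (real n + real k + 2)"
proof (induction k)
  case (Suc k)
  have "2 * (real (Suc k) + 1) * bessel_coeff (Suc n) (Suc (Suc k))
      = bessel_coeff (Suc n) (Suc k) * ((real n - real k) * (real n + real k + 3))"
    unfolding bessel_coeff_Suc[of "Suc n" "Suc k"] by (simp add: field_simps)
  also have "bessel_coeff (Suc n) (Suc k)
      = bessel_coeff n k * (real n + real k + 1) * (real n + real k + 2) / (2 * (real k + 1))"
    using Suc.IH by (simp add: field_simps)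
  finally show ?case unfolding bessel_coeff_Suc[of _ k] by (simp add: field_simps)
qed (simp add: bessel_coeff_Suc algebra_simps)

lemma bessel_coeff_Suc_Suc:
  "bessel_coeff (Suc (Suc n)) (Suc k) = (2 * real n + 3) * bessel_coeff (Suc n) k + bessel_coeff n (Suc k)"
proof -
  have diag: "bessel_coeff (Suc (Suc n)) (Suc k)
      = bessel_coeff (Suc n) k * (real n + real k + 2) * (real n + real k + 3) / (2 * (real k + 1))"
    using bessel_coeff_diag[of k "Suc n"] by (simp add: field_simps)
  have shift: "bessel_coeff n (Suc k)
      = bessel_coeff (Suc n) k * (real n + 1 - real k) * (real n - real k) / (2 * (real k + 1))"
    using bessel_coeff_shift[of k n] by (simp add: field_simps)
  show ?thesis unfolding diag shift by (simp add: field_simps)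
qed

lemma coeff_bessel_poly: "coeff (bessel_poly n) k = bessel_coeff n k"
proof (induction n arbitrary: k rule: bessel_poly.induct)
  case 1
  then show ?case by (cases k) (simp_all add: bessel_coeff_eq_0)
next
  case 2
  then show ?case
    by (cases k; cases "k - 1") (auto simp: bessel_coeff_def coeff_pCons)
next
  case (3 n)
  then show ?case by (cases k) (simp_all add: coeff_pCons bessel_coeff_Suc_Suc)
qed

lemma poly_higher_pderiv_legendre:
  "poly ((pderiv ^^ k) (legendre n)) 1 = bessel_coeff n k \<and>
   poly ((pderiv ^^ k) (legendre n)) (-1) = (-1) ^ (n + k) * bessel_coeff n k"
proof (induction n arbitrary: k rule: legendre.induct)
  case 1
  then show ?case by (cases k) (simp_all add: bessel_coeff_eq_0 funpow_Suc_right del: funpow.simps)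
next
  case 2
  then show ?case
    by (cases k; cases "k - 1")
      (auto simp: bessel_coeff_def funpow_Suc_right pderiv_pCons simp del: funpow.simps)
next
  case (3 n)
  show ?case
  proof (cases k)
    case (Suc j)
    have "(pderiv ^^ Suc j) (legendre (Suc (Suc n)))
        = (pderiv ^^ Suc j) (legendre n) + smult (2 * real n + 3) ((pderiv ^^ j) (legendre (Suc n)))"
      by (simp only: funpow_Suc_right o_apply pderiv_legendre_SS higher_pderiv_add higher_pderiv_smult)
    then show ?thesis using "3.IH"(1)[of j] "3.IH"(2)[of "Suc j"] Suc
      by (simp add: bessel_coeff_Suc_Suc algebra_simps)
  qed simp
qed

lemma poly_higher_pderiv_legendre_one: "poly ((pderiv ^^ k) (legendre n)) 1 = bessel_coeff n k"
  and poly_higher_pderiv_legendre_neg_one: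
    "poly ((pderiv ^^ k) (legendre n)) (-1) = (-1) ^ (n + k) * bessel_coeff n k"
  using poly_higher_pderiv_legendre by blast+

lemma bessel_poly_reflection:
  "bessel_poly (Suc n) * pcompose (bessel_poly n) [:0, -1:]
     + pcompose (bessel_poly (Suc n)) [:0, -1:] * bessel_poly n = [:2:]"
proof -
  have "poly (bessel_poly (Suc n)) s * poly (bessel_poly n) (-s)
          + poly (bessel_poly (Suc n)) (-s) * poly (bessel_poly n) s = 2" for s
    by (induction n) (simp_all add: algebra_simps)
  then show ?thesis by (intro poly_ext) (simp add: poly_pcompose)
qed

section \<open>Closed form of \<open>q\<^sub>p\<^sub>,\<^sub>\<nu>\<close>\<close>

definition alpha :: "nat \<Rightarrow> nat \<Rightarrow> real" where
  "alpha p k = (-1) ^ k * bessel_coeff (Suc p) k / 2"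

definition beta :: "nat \<Rightarrow> nat \<Rightarrow> real" where
  "beta p k = (-1) ^ k * bessel_coeff p k / 2"

definition qsum :: "nat \<Rightarrow> nat \<Rightarrow> real poly" where
  "qsum p n = (\<Sum>k\<le>n. smult (alpha p k) (psi p k) + smult (beta p k) (psi (Suc p) k))"

lemma higher_pderiv_psi: "k \<le> m \<Longrightarrow> (pderiv ^^ m) (psi i k) = (pderiv ^^ (m - k)) (legendre i)"
proof (induction k arbitrary: m)
  case (Suc k)
  then obtain m' where m: "m = Suc m'" by (cases m) auto
  then have "(pderiv ^^ m) (psi i (Suc k)) = (pderiv ^^ m') (psi i k)"
    by (simp only: funpow_Suc_right o_apply psi.simps pderiv_prim)
  then show ?case using Suc m by simp
qed simp

lemma poly_higher_pderiv_qsum: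
  "poly ((pderiv ^^ n) (qsum p n)) x =
     (\<Sum>k\<le>n. alpha p k * poly ((pderiv ^^ (n - k)) (legendre p)) x
            + beta p k * poly ((pderiv ^^ (n - k)) (legendre (Suc p))) x)"
  unfolding qsum_def higher_pderiv_sum higher_pderiv_add higher_pderiv_smult poly_sum
  by (intro sum.cong refl) (simp add: higher_pderiv_psi del: funpow.simps)

text \<open>The recursion chooses \<open>\<alpha>\<^sub>p\<^sub>,\<^sub>\<nu>\<close>, \<open>\<beta>\<^sub>p\<^sub>,\<^sub>\<nu>\<close> exactly so that \<open>q\<^sub>p\<^sub>,\<^sub>\<nu>\<^sup>(\<^sup>\<nu>\<^sup>)\<close>
  vanishes at \<open>\<plusminus>1\<close>. For the closed form, the value at \<open>1\<close> is half the \<open>n\<close>-th coefficient of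
  \<open>y\<^sub>p\<^sub>+\<^sub>1(-x) y\<^sub>p(x) + y\<^sub>p(-x) y\<^sub>p\<^sub>+\<^sub>1(x) = 2\<close>, and the value at \<open>-1\<close> is, up to sign,
  half the \<open>n\<close>-th coefficient of \<open>y\<^sub>p\<^sub>+\<^sub>1 y\<^sub>p - y\<^sub>p y\<^sub>p\<^sub>+\<^sub>1 = 0\<close>.\<close>

lemma poly_higher_pderiv_qsum_one:
  assumes "0 < n"
  shows "poly ((pderiv ^^ n) (qsum p n)) 1 = 0"
proof -
  let ?R = "\<lambda>m. pcompose (bessel_poly m) [:0, -1:]"
  have coeff_R: "coeff (?R m) i = (-1) ^ i * bessel_coeff m i" for m i
    by (simp add: coeff_pcompose_linear coeff_bessel_poly)
  have "2 * poly ((pderiv ^^ n) (qsum p n)) 1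
      = coeff (?R (Suc p) * bessel_poly p + ?R p * bessel_poly (Suc p)) n"
    unfolding coeff_add coeff_mult coeff_R coeff_bessel_poly poly_higher_pderiv_qsum
      poly_higher_pderiv_legendre_one
    by (simp add: alpha_def beta_def sum_distrib_left sum.distrib algebra_simps)
  also have "?R (Suc p) * bessel_poly p + ?R p * bessel_poly (Suc p) = [:2:]"
    using bessel_poly_reflection[of p] by (simp add: mult.commute add.commute)
  finally show ?thesis using assms by (simp add: coeff_pCons split: nat.splits)
qed

lemma poly_higher_pderiv_qsum_neg_one: "poly ((pderiv ^^ n) (qsum p n)) (-1) = 0"
proof -
  have "poly ((pderiv ^^ n) (qsum p n)) (-1)
      = (\<Sum>k\<le>n. (-1) ^ (p + n) / 2 * (bessel_coeff (Suc p) k * bessel_coeff p (n - k)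
                                      - bessel_coeff p k * bessel_coeff (Suc p) (n - k)))"
    unfolding poly_higher_pderiv_qsum poly_higher_pderiv_legendre_neg_one
  proof (intro sum.cong refl)
    fix k assume "k \<in> {..n}"
    then have "k + (p + (n - k)) = p + n" by simp
    then have sign: "(-1::real) ^ k * (-1) ^ (p + (n - k)) = (-1) ^ (p + n)"
      by (metis power_add)
    have alpha_term: "alpha p k * ((-1) ^ (p + (n - k)) * bessel_coeff p (n - k))
        = (-1) ^ (p + n) * (bessel_coeff (Suc p) k * bessel_coeff p (n - k)) / 2"
      unfolding sign[symmetric] by (simp add: alpha_def mult_ac)
    have beta_term: "beta p k * ((-1) ^ (Suc p + (n - k)) * bessel_coeff (Suc p) (n - k))
        = - ((-1) ^ (p + n) * (bessel_coeff p k * bessel_coeff (Suc p) (n - k)) / 2)"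
      unfolding sign[symmetric] by (simp add: beta_def mult_ac)
    show "alpha p k * ((-1) ^ (p + (n - k)) * bessel_coeff p (n - k))
            + beta p k * ((-1) ^ (Suc p + (n - k)) * bessel_coeff (Suc p) (n - k))
          = (-1) ^ (p + n) / 2 * (bessel_coeff (Suc p) k * bessel_coeff p (n - k)
                                   - bessel_coeff p k * bessel_coeff (Suc p) (n - k))"
      unfolding alpha_term beta_term by (simp add: algebra_simps)
  qed
  also have "\<dots> = (-1) ^ (p + n) / 2 * (coeff (bessel_poly (Suc p) * bessel_poly p) n
                                          - coeff (bessel_poly p * bessel_poly (Suc p)) n)"
    by (simp only: coeff_mult coeff_bessel_poly right_diff_distrib sum_distrib_left sum_subtractf)
  finally show ?thesis by (simp add: mult.commute)
qed

lemma qsum_Suc: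
  "qsum p (Suc n) = qsum p n + smult (alpha p (Suc n)) (psi p (Suc n))
                             + smult (beta p (Suc n)) (psi (Suc p) (Suc n))"
  by (simp add: qsum_def add.assoc)

lemma qpol_eq_qsum: "qpol p \<nu> = qsum p \<nu>"
proof (induction \<nu>)
  case 0
  then show ?case by (simp add: qsum_def alpha_def beta_def smult_add_right)
next
  case (Suc \<nu>)
  define d where "d = (pderiv ^^ Suc \<nu>) (qsum p \<nu>)"
  have "(pderiv ^^ Suc \<nu>) (qsum p (Suc \<nu>))
      = d + smult (alpha p (Suc \<nu>)) (legendre p) + smult (beta p (Suc \<nu>)) (legendre (Suc p))"
    unfolding qsum_Suc d_def higher_pderiv_add higher_pderiv_smult
    by (simp only: higher_pderiv_psi[OF order_refl] diff_self_eq_0 funpow_0)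
  then have at_one: "poly d 1 + alpha p (Suc \<nu>) + beta p (Suc \<nu>) = 0"
    and at_neg_one: "poly d (-1) + (-1) ^ p * (alpha p (Suc \<nu>) - beta p (Suc \<nu>)) = 0"
    using poly_higher_pderiv_qsum_one[of "Suc \<nu>" p] poly_higher_pderiv_qsum_neg_one[of "Suc \<nu>" p]
    by (simp_all add: algebra_simps)
  have "poly d (-1) = - ((-1) ^ p * (alpha p (Suc \<nu>) - beta p (Suc \<nu>)))"
    using at_neg_one by (simp add: eq_neg_iff_add_eq_0)
  then have "(-1) ^ p * poly d (-1)
      = - (((-1) ^ p * (-1) ^ p) * (alpha p (Suc \<nu>) - beta p (Suc \<nu>)))"
    by (simp only: mult.assoc mult_minus_right)
  then have "(-1) ^ p * poly d (-1) = beta p (Suc \<nu>) - alpha p (Suc \<nu>)"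
    by (simp flip: power_mult_distrib)
  then have "- (poly d 1 + (-1) ^ p * poly d (-1)) / 2 = alpha p (Suc \<nu>)"
    and "- (poly d 1 - (-1) ^ p * poly d (-1)) / 2 = beta p (Suc \<nu>)"
    using at_one by simp_all
  then show ?case by (simp add: Suc.IH d_def Let_def qsum_Suc)
qed

section \<open>Integrals over \<open>[-1, 1]\<close> and the \<open>L\<^sup>2\<close> norm\<close>

definition poly_integral :: "real poly \<Rightarrow> real" where
  "poly_integral f = poly (prim f) 1"

lemma has_integral_poly_integral: "(poly f has_integral poly_integral f) {-1..1}"
proof -
  have "(poly f has_integral poly (prim f) 1 - poly (prim f) (-1)) {-1..1}"
  proof (rule fundamental_theorem_of_calculus)
    fix x :: real
    show "(poly (prim f) has_vector_derivative poly f x) (at x within {-1..1})"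
      using DERIV_subset[OF poly_DERIV[of "prim f" x]]
      by (simp add: has_real_derivative_iff_has_vector_derivative)
  qed simp
  then show ?thesis by (simp add: poly_integral_def)
qed

lemma L2sq_eq_poly_integral: "L2sq f = poly_integral (f * f)"
proof -
  have "poly (f * f) = (\<lambda>x. (poly f x)\<^sup>2)" by (simp add: fun_eq_iff power2_eq_square)
  then show ?thesis
    using has_integral_poly_integral[of "f * f"] by (simp add: L2sq_def integral_unique)
qed

lemma L2sq_nonneg: "0 \<le> L2sq f"
  using has_integral_nonneg[OF has_integral_poly_integral[of "f * f"]]
  by (simp add: L2sq_eq_poly_integral)

lemma poly_integral_add: "poly_integral (f + g) = poly_integral f + poly_integral g"
  by (simp add: poly_integral_def prim_add)

lemma poly_integral_diff: "poly_integral (f - g) = poly_integral f - poly_integral g"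
  by (simp add: poly_integral_def prim_diff)

lemma poly_integral_smult: "poly_integral (smult c f) = c * poly_integral f"
  by (simp add: poly_integral_def prim_smult)

lemma poly_integral_by_parts:
  "poly_integral (pderiv F * g)
     = poly F 1 * poly g 1 - poly F (-1) * poly g (-1) - poly_integral (F * pderiv g)"
proof -
  have "pderiv F * g = pderiv (F * g) - F * pderiv g" by (simp add: pderiv_mult)
  then have "poly_integral (pderiv F * g) = poly_integral (pderiv (F * g)) - poly_integral (F * pderiv g)"
    by (simp add: poly_integral_diff)
  then show ?thesis by (simp add: poly_integral_def prim_pderiv)
qed

lemma poly_integral_legendre_Suc_mult:
  "poly_integral (legendre (Suc n) * g)
     = (poly_integral (legendre n * pderiv g) - poly_integral (legendre (Suc (Suc n)) * pderiv g))
       / (2 * real n + 3)"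
proof -
  have "poly_integral (legendre (Suc n) * g) = - poly_integral (prim (legendre (Suc n)) * pderiv g)"
    using poly_integral_by_parts[of "prim (legendre (Suc n))" g] by simp
  then show ?thesis
    by (simp add: prim_legendre_Suc poly_integral_diff poly_integral_smult left_diff_distrib field_simps)
qed

lemma legendre_orthogonal: "degree g < n \<Longrightarrow> poly_integral (legendre n * g) = 0"
proof (induction "degree g" arbitrary: g n)
  case 0
  then obtain m where "n = Suc m" by (cases n) auto
  moreover have "pderiv g = 0" using "0.hyps" by (simp add: pderiv_eq_0_iff)
  ultimately show ?case by (simp add: poly_integral_legendre_Suc_mult[of m g])
next
  case (Suc d)
  obtain m where n: "n = Suc m" using Suc.prems by (cases n) auto
  have "d = degree (pderiv g)" "degree (pderiv g) < m" "degree (pderiv g) < Suc (Suc m)"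
    using Suc.hyps(2) Suc.prems n by (simp_all add: degree_pderiv)
  then show ?case unfolding n poly_integral_legendre_Suc_mult[of m g] by (simp add: Suc.hyps(1))
qed

lemma poly_integral_1 [simp]: "poly_integral 1 = 2"
proof -
  have "prim 1 = [:1, 1:]" by (rule prim_eqI) (simp_all add: pderiv_pCons)
  then show ?thesis by (simp add: poly_integral_def)
qed

lemma poly_integral_legendre_square: "poly_integral (legendre n * legendre n) = 2 / (2 * real n + 1)"
proof (induction n)
  case 0
  then show ?case by simp
next
  case (Suc n)
  have degree_pderiv_legendre: "degree (pderiv (legendre k)) < Suc k" for k
    using degree_legendre[of k] by (simp add: degree_pderiv)
  have "poly_integral (legendre n * pderiv (legendre (Suc n))) = 2"
  proof (cases n)
    case (Suc m)
    have "poly_integral (legendre (Suc m) * pderiv (legendre m)) = 0"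
      by (rule legendre_orthogonal) (use degree_pderiv_legendre in simp)
    then show ?thesis
      using Suc.IH unfolding Suc pderiv_legendre_SS
      by (simp add: distrib_left poly_integral_add poly_integral_smult mult_ac field_simps)
  qed (simp add: pderiv_pCons flip: one_pCons)
  moreover have "poly_integral (legendre (Suc (Suc n)) * pderiv (legendre (Suc n))) = 0"
    by (rule legendre_orthogonal) (use degree_pderiv_legendre in simp)
  ultimately show ?case
    by (simp add: poly_integral_legendre_Suc_mult[of n "legendre (Suc n)"] add_ac)
qed

lemma quadratic_nonneg_imp_discrim_le:
  fixes a b c :: real
  assumes "0 \<le> a" and nonneg: "\<And>t. 0 \<le> a * t\<^sup>2 + 2 * b * t + c"
  shows "b\<^sup>2 \<le> a * c"
proof (cases "a = 0")
  case True
  have "b = 0"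
  proof (rule ccontr)
    assume "b \<noteq> 0"
    then have "a * (- (c + 1) / (2 * b))\<^sup>2 + 2 * b * (- (c + 1) / (2 * b)) + c = -1"
      using True by (simp add: field_simps)
    then show False using nonneg[of "- (c + 1) / (2 * b)"] by simp
  qed
  then show ?thesis using True by simp
next
  case False
  then have "0 \<le> c - b\<^sup>2 / a"
    using nonneg[of "- b / a"] by (simp add: field_simps power2_eq_square)
  then show ?thesis using False assms(1) by (simp add: field_simps)
qed

definition l2norm :: "real poly \<Rightarrow> real" where
  "l2norm f = sqrt (L2sq f)"

lemma l2norm_nonneg: "0 \<le> l2norm f"
  by (simp add: l2norm_def L2sq_nonneg)

lemma poly_integral_cauchy_schwarz: "poly_integral (f * g) \<le> l2norm f * l2norm g"
proof -
  have "(poly_integral (f * g))\<^sup>2 \<le> L2sq g * L2sq f"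
  proof (rule quadratic_nonneg_imp_discrim_le)
    fix t
    have "(f + smult t g) * (f + smult t g)
        = smult (t\<^sup>2) (g * g) + (smult t (f * g) + smult t (f * g)) + f * f"
      by (simp add: algebra_simps power2_eq_square)
    then have "L2sq (f + smult t g)
        = t\<^sup>2 * L2sq g + (t * poly_integral (f * g) + t * poly_integral (f * g)) + L2sq f"
      by (simp only: L2sq_eq_poly_integral poly_integral_add poly_integral_smult)
    then show "0 \<le> L2sq g * t\<^sup>2 + 2 * poly_integral (f * g) * t + L2sq f"
      using L2sq_nonneg[of "f + smult t g"] by (simp add: algebra_simps)
  qed (rule L2sq_nonneg)
  then show ?thesis
    unfolding l2norm_def by (metis real_le_rsqrt real_sqrt_mult mult.commute)
qed

lemma l2norm_add: "l2norm (f + g) \<le> l2norm f + l2norm g"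
proof -
  have "(f + g) * (f + g) = f * f + (f * g + f * g) + g * g"
    by (simp add: algebra_simps)
  then have "L2sq (f + g) = L2sq f + (poly_integral (f * g) + poly_integral (f * g)) + L2sq g"
    by (simp only: L2sq_eq_poly_integral poly_integral_add)
  also have "\<dots> \<le> (l2norm f + l2norm g)\<^sup>2"
    using poly_integral_cauchy_schwarz[of f g] L2sq_nonneg[of f] L2sq_nonneg[of g]
    by (simp add: l2norm_def power2_sum)
  finally show ?thesis
    unfolding l2norm_def[of "f + g"] by (intro real_le_lsqrt add_nonneg_nonneg l2norm_nonneg)
qed

lemma l2norm_smult: "l2norm (smult c f) = \<bar>c\<bar> * l2norm f"
  by (simp add: l2norm_def L2sq_eq_poly_integral poly_integral_smult real_sqrt_mult
      power2_eq_square mult_smult_right mult_smult_left flip: mult.assoc)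

lemma l2norm_sum: "l2norm (\<Sum>k\<in>A. f k) \<le> (\<Sum>k\<in>A. l2norm (f k))"
proof (induction A rule: infinite_finite_induct)
  case (insert x F)
  then show ?case using l2norm_add[of "f x" "sum f F"] by simp
qed (simp_all add: l2norm_def L2sq_def)

lemma l2norm_legendre: "l2norm (legendre j) = sqrt (2 / (2 * real j + 1))"
  by (simp add: l2norm_def L2sq_eq_poly_integral poly_integral_legendre_square)

section \<open>Legendre expansions of the primitives\<close>

inductive legendre_comb :: "nat \<Rightarrow> real \<Rightarrow> real poly \<Rightarrow> bool" where
  legendre_comb_single: "m \<le> j \<Longrightarrow> \<bar>c\<bar> \<le> \<beta> \<Longrightarrow> legendre_comb m \<beta> (smult c (legendre j))"
| legendre_comb_add: "legendre_comb m \<beta> f \<Longrightarrow> legendre_comb m \<gamma> g \<Longrightarrow> legendre_comb m (\<beta> + \<gamma>) (f + g)"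

lemma legendre_comb_mono: "legendre_comb m \<beta> f \<Longrightarrow> \<beta> \<le> \<beta>' \<Longrightarrow> legendre_comb m \<beta>' f"
proof (induction arbitrary: \<beta>' rule: legendre_comb.induct)
  case (legendre_comb_add m \<beta> f \<gamma> g)
  have "legendre_comb m (\<beta> + (\<beta>' - \<beta>)) (f + g)"
    using legendre_comb_add by (intro legendre_comb.legendre_comb_add) auto
  then show ?case by simp
qed (auto intro: legendre_comb.intros)

lemma l2norm_legendre_comb: "legendre_comb m \<beta> f \<Longrightarrow> l2norm f \<le> \<beta> * sqrt (2 / (2 * real m + 1))"
proof (induction rule: legendre_comb.induct)
  case (legendre_comb_single m j c \<beta>)
  have "sqrt (2 / (2 * real j + 1)) \<le> sqrt (2 / (2 * real m + 1))"
    using legendre_comb_single(1) by (simp add: frac_le)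
  then show ?case using legendre_comb_single(2)
    unfolding l2norm_smult l2norm_legendre by (intro mult_mono) auto
next
  case (legendre_comb_add m \<beta> f \<gamma> g)
  then show ?case using l2norm_add[of f g] by (simp add: algebra_simps)
qed

text \<open>Integration lowers the minimal Legendre index by one (\<open>m - 1\<close> is truncated at \<open>m = 0\<close>,
  where \<open>prim L\<^sub>0 = L\<^sub>1 + L\<^sub>0\<close>) and shrinks the coefficients by the factor \<open>2 / (2m + 1)\<close>.\<close>

lemma legendre_comb_prim:
  "legendre_comb m \<beta> f \<Longrightarrow> legendre_comb (m - 1) (2 * \<beta> / (2 * real m + 1)) (prim f)"
proof (induction rule: legendre_comb.induct)
  case (legendre_comb_single m j c \<beta>)
  show ?case
  proof (cases j)
    case 0
    then have "m = 0" using legendre_comb_single by simp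
    have "legendre_comb 0 (\<bar>c\<bar> + \<bar>c\<bar>) (smult c (legendre 1) + smult c (legendre 0))"
      by (intro legendre_comb.intros) auto
    moreover have "prim (smult c (legendre 0)) = smult c (legendre 1) + smult c (legendre 0)"
      by (simp only: prim_smult prim_legendre_0 smult_add_right)
    ultimately show ?thesis
      using 0 \<open>m = 0\<close> legendre_comb_single(2) by (auto elim: legendre_comb_mono)
  next
    case (Suc i)
    have "legendre_comb (m - 1) (\<bar>c / (2 * real i + 3)\<bar> + \<bar>- c / (2 * real i + 3)\<bar>)
        (smult (c / (2 * real i + 3)) (legendre (Suc (Suc i))) + smult (- c / (2 * real i + 3)) (legendre i))"
      using legendre_comb_single Suc by (intro legendre_comb.intros) auto
    moreover have "\<bar>c / (2 * real i + 3)\<bar> + \<bar>- c / (2 * real i + 3)\<bar> \<le> 2 * \<beta> / (2 * real m + 1)"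
      using legendre_comb_single Suc by (simp add: abs_divide frac_le flip: mult_2)
    ultimately show ?thesis
      using Suc by (auto simp: prim_smult prim_legendre_Suc smult_diff_right elim: legendre_comb_mono)
  qed
next
  case (legendre_comb_add m \<beta> f \<gamma> g)
  then show ?case
    using legendre_comb.legendre_comb_add[OF legendre_comb_add.IH] by (simp add: prim_add add_divide_distrib)
qed

definition psi_weight :: "nat \<Rightarrow> nat \<Rightarrow> real" where
  "psi_weight i k = (\<Prod>t<k. 2 / (2 * real (i - t) + 1))"

lemma legendre_comb_psi: "legendre_comb (i - k) (psi_weight i k) (psi i k)"
proof (induction k)
  case 0
  have "legendre_comb i 1 (smult 1 (legendre i))" by (rule legendre_comb_single) auto
  then show ?case by (simp add: psi_weight_def)
next
  case (Suc k)
  then show ?case using legendre_comb_prim[OF Suc.IH] by (simp add: psi_weight_def mult.commute)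
qed

lemma l2norm_psi: "l2norm (psi i k) \<le> psi_weight i k * sqrt (2 / (2 * real (i - k) + 1))"
  by (rule l2norm_legendre_comb[OF legendre_comb_psi])

lemma psi_weight_nonneg: "0 \<le> psi_weight i k"
  by (simp add: psi_weight_def prod_nonneg)

lemma bessel_coeff_psi_weight_le:
  assumes "m \<le> Suc i"
  shows "bessel_coeff m k * psi_weight i k \<le> (2 * real m + 1) ^ k / fact k"
proof (induction k)
  case (Suc k)
  show ?case
  proof (cases "k < m")
    case True
    define D where "D = 2 * real (i - k) + 1"
    define r where "r = (real m - real k) / D * ((real m + real k + 1) / (real k + 1))"
    have "bessel_coeff m (Suc k) * psi_weight i (Suc k) = bessel_coeff m k * psi_weight i k * r"
      unfolding bessel_coeff_Suc psi_weight_def prod.lessThan_Suc r_def D_def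
      by (simp add: divide_simps)
    also have "\<dots> \<le> (2 * real m + 1) ^ k / fact k * ((2 * real m + 1) / (real k + 1))"
    proof (rule mult_mono)
      have "real m - real k \<le> D" using True assms by (simp add: D_def of_nat_diff)
      then have "(real m - real k) / D \<le> 1" by (simp add: D_def)
      moreover have "0 \<le> (real m - real k) / D" "0 \<le> (real m + real k + 1) / (real k + 1)"
        using True by (simp_all add: D_def)
      ultimately have "r \<le> (real m + real k + 1) / (real k + 1)"
        unfolding r_def by (intro mult_left_le_one_le)
      also have "\<dots> \<le> (2 * real m + 1) / (real k + 1)"
        using True by (simp add: divide_right_mono)
      finally show "r \<le> (2 * real m + 1) / (real k + 1)" .
    qed (use Suc True in \<open>auto simp: r_def D_def bessel_coeff_nonneg psi_weight_nonneg\<close>)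
    also have "\<dots> = (2 * real m + 1) ^ Suc k / fact (Suc k)"
      by (simp add: field_simps)
    finally show ?thesis .
  qed (simp add: bessel_coeff_eq_0)
qed (simp add: psi_weight_def)

lemma sqrt_two_div_le:
  assumes "1 \<le> p"
  shows "sqrt (2 / (2 * real (p - k) + 1)) \<le> 2 ^ Suc k / sqrt (real p)"
proof -
  have "2 * real p \<le> 4 ^ Suc k * (2 * real (p - k) + 1)"
  proof (cases "2 * k \<le> p")
    case True
    then have "2 * real p \<le> 4 * (2 * real (p - k) + 1)" by (simp add: of_nat_diff)
    also have "\<dots> \<le> 4 ^ Suc k * (2 * real (p - k) + 1)"
      by (intro mult_right_mono) (simp_all add: one_le_power)
    finally show ?thesis .
  next
    case False
    have "real k \<le> 2 ^ k" using less_exp[of k] by (simp add: less_imp_le)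
    also have "(2::real) ^ k \<le> 4 ^ k" by (rule power_mono) simp_all
    finally have "real k \<le> 4 ^ k" .
    moreover have "real p \<le> 2 * real k" using False by simp
    ultimately have "2 * real p \<le> 4 ^ Suc k" by (simp only: power_Suc)
    also have "\<dots> \<le> 4 ^ Suc k * (2 * real (p - k) + 1)" by simp
    finally show ?thesis .
  qed
  moreover have "((2::real) ^ Suc k)\<^sup>2 = 4 ^ Suc k"
    by (simp add: power2_eq_square flip: power_mult_distrib)
  ultimately have "sqrt (2 / (2 * real (p - k) + 1)) * sqrt (real p) \<le> 2 ^ Suc k"
    unfolding real_sqrt_mult[symmetric] by (intro real_le_lsqrt) (simp_all add: field_simps)
  then show ?thesis using assms by (simp add: pos_le_divide_eq)
qed

lemma sum_power_div_fact_le_exp: "(\<Sum>k\<le>n. x ^ k / fact k) \<le> exp (x::real)" if "0 \<le> x"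
proof -
  have "(\<Sum>k\<le>n. inverse (fact k) * x ^ k) \<le> (\<Sum>k. inverse (fact k) * x ^ k)"
    using that by (intro sum_le_suminf summable_exp) auto
  then show ?thesis by (simp add: exp_def field_simps)
qed

lemma l2norm_qsum_term_le:
  "\<bar>alpha p k\<bar> * l2norm (psi p k) + \<bar>beta p k\<bar> * l2norm (psi (Suc p) k)
     \<le> (2 * real p + 3) ^ k / fact k * sqrt (2 / (2 * real (p - k) + 1))"
proof -
  let ?s = "\<lambda>j. sqrt (2 / (2 * real j + 1))"
  have "\<bar>alpha p k\<bar> * l2norm (psi p k) \<le> bessel_coeff (Suc p) k / 2 * (psi_weight p k * ?s (p - k))"
    using l2norm_psi[of p k] bessel_coeff_nonneg[of "Suc p" k]
    by (simp add: alpha_def abs_mult mult_left_mono)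
  also have "\<dots> \<le> (2 * real p + 3) ^ k / fact k / 2 * ?s (p - k)"
    using mult_right_mono[OF bessel_coeff_psi_weight_le[of "Suc p" p k], of "?s (p - k)"]
    by (simp add: add_ac mult_ac)
  finally have alpha_term: "\<bar>alpha p k\<bar> * l2norm (psi p k) \<le> (2 * real p + 3) ^ k / fact k / 2 * ?s (p - k)" .
  have "?s (Suc p - k) \<le> ?s (p - k)" by (simp add: frac_le)
  then have "\<bar>beta p k\<bar> * l2norm (psi (Suc p) k) \<le> bessel_coeff p k / 2 * (psi_weight (Suc p) k * ?s (p - k))"
    using l2norm_psi[of "Suc p" k] bessel_coeff_nonneg[of p k] psi_weight_nonneg[of "Suc p" k]
    by (simp add: beta_def abs_mult mult_left_mono order_trans)
  also have "\<dots> \<le> (2 * real p + 1) ^ k / fact k / 2 * ?s (p - k)"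
    using mult_right_mono[OF bessel_coeff_psi_weight_le[of p "Suc p" k], of "?s (p - k)"]
    by (simp add: mult_ac)
  also have "\<dots> \<le> (2 * real p + 3) ^ k / fact k / 2 * ?s (p - k)"
    by (intro mult_right_mono divide_right_mono power_mono) auto
  finally show ?thesis using alpha_term by simp
qed

lemma qsum_term_weight_le:
  assumes "1 \<le> p" and "k \<le> \<nu>"
  shows "(2 * real p + 3) ^ k / fact k * sqrt (2 / (2 * real (p - k) + 1))
           \<le> 2 * real p ^ \<nu> / sqrt (real p) * (10 ^ k / fact k)"
proof -
  have "(2 * real p + 3) ^ k \<le> (5 * real p) ^ k" using assms by (intro power_mono) auto
  also have "\<dots> \<le> 5 ^ k * real p ^ \<nu>"
    using assms by (simp add: power_mult_distrib power_increasing)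
  finally have "(2 * real p + 3) ^ k * sqrt (2 / (2 * real (p - k) + 1))
      \<le> 5 ^ k * real p ^ \<nu> * (2 ^ Suc k / sqrt (real p))"
    using sqrt_two_div_le[OF assms(1), of k] by (intro mult_mono) auto
  also have "\<dots> = 2 * real p ^ \<nu> / sqrt (real p) * 10 ^ k"
    by (simp add: power_mult_distrib[symmetric] field_simps)
  finally show ?thesis by (simp add: divide_right_mono field_simps)
qed

lemma l2norm_qpol_le:
  assumes "1 \<le> p"
  shows "l2norm (qpol p \<nu>) \<le> 2 * exp 10 * real p ^ \<nu> / sqrt (real p)"
proof -
  have "l2norm (qpol p \<nu>)
      \<le> (\<Sum>k\<le>\<nu>. l2norm (smult (alpha p k) (psi p k) + smult (beta p k) (psi (Suc p) k)))"
    unfolding qpol_eq_qsum qsum_def by (rule l2norm_sum)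
  also have "\<dots> \<le> (\<Sum>k\<le>\<nu>. \<bar>alpha p k\<bar> * l2norm (psi p k) + \<bar>beta p k\<bar> * l2norm (psi (Suc p) k))"
    by (intro sum_mono order_trans[OF l2norm_add]) (simp add: l2norm_smult)
  also have "\<dots> \<le> (\<Sum>k\<le>\<nu>. (2 * real p + 3) ^ k / fact k * sqrt (2 / (2 * real (p - k) + 1)))"
    by (intro sum_mono l2norm_qsum_term_le)
  also have "\<dots> \<le> (\<Sum>k\<le>\<nu>. 2 * real p ^ \<nu> / sqrt (real p) * (10 ^ k / fact k))"
    using assms by (intro sum_mono qsum_term_weight_le) auto
  also have "\<dots> = 2 * real p ^ \<nu> / sqrt (real p) * (\<Sum>k\<le>\<nu>. 10 ^ k / fact k)"
    by (simp add: sum_distrib_left)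
  also have "\<dots> \<le> 2 * real p ^ \<nu> / sqrt (real p) * exp 10"
    by (intro mult_left_mono sum_power_div_fact_le_exp) auto
  finally show ?thesis by (simp add: mult_ac)
qed

theorem lemma7:
  shows "\<exists>C::real. \<forall>p::nat. \<forall>\<nu>::nat. p \<ge> 1 \<longrightarrow>
           L2sq (qpol p \<nu>) \<le> C * real p powr (2 * real \<nu> - 1)"
proof (intro exI allI impI)
  fix p \<nu> :: nat
  assume p: "p \<ge> 1"
  have "L2sq (qpol p \<nu>) = (l2norm (qpol p \<nu>))\<^sup>2"
    by (simp add: l2norm_def L2sq_nonneg)
  also have "\<dots> \<le> (2 * exp 10 * real p ^ \<nu> / sqrt (real p))\<^sup>2"
    using l2norm_qpol_le[OF p] l2norm_nonneg by (intro power_mono)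
  also have "\<dots> = (2 * exp 10)\<^sup>2 * (real p ^ (2 * \<nu>) / real p)"
    using p by (simp add: power_divide power_mult_distrib power_even_eq)
  also have "real p ^ (2 * \<nu>) / real p = real p powr (2 * real \<nu> - 1)"
    using p by (simp add: powr_diff flip: powr_realpow)
  finally show "L2sq (qpol p \<nu>) \<le> (2 * exp 10)\<^sup>2 * real p powr (2 * real \<nu> - 1)" .
qed

end
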